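(* Let $R$ be a Bézout domain and let $A,B,C\in R^{n\times n}$ satisfy $ABA=ACA$. If $AB$ and $CA$ are group invertible, then $(AB)^{\#}$ is similar to $(CA)^{\#}$.
   Context: A Bézout domain is an integral domain in which every finitely generated ideal is principal. A matrix $M\in R^{n\times n}$ is group invertible if there exists $X\in R^{n\times n}$ with $MX=XM$, $XMX=X$, $MXM=M$; such $X$ is unique and denoted $M^{\#}$ (the group inverse). Two matrices $M,N\in R^{n\times n}$ are similar if $M=S^{-1}NS$ for some invertible $S\in R^{n\times n}$. *)

theory Defs
  imports "Jordan_Normal_Form.Matrix"
begin

definition gen_ideal :: "'a::comm_ring_1 set \<Rightarrow> 'a set" where
  "gen_ideal S = {(\<Sum>x\<in>S. f x * x) | f. True}"

definition bezout_domain :: "'a::idom itself \<Rightarrow> bool" where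
  "bezout_domain _ \<longleftrightarrow>
     (\<forall>S :: 'a set. finite S \<longrightarrow> (\<exists>d. gen_ideal S = {r * d | r. True}))"

definition is_group_inverse :: "'a::comm_ring_1 mat \<Rightarrow> 'a mat \<Rightarrow> bool" where
  "is_group_inverse M X \<longleftrightarrow>
     X \<in> carrier_mat (dim_row M) (dim_col M) \<and>
     M * X = X * M \<and> X * M * X = X \<and> M * X * M = M"

definition group_invertible :: "'a::comm_ring_1 mat \<Rightarrow> bool" where
  "group_invertible M \<longleftrightarrow> (\<exists>X. is_group_inverse M X)"

definition group_inv :: "'a::comm_ring_1 mat \<Rightarrow> 'a mat" where
  "group_inv M = (THE X. is_group_inverse M X)"

end

(*
  Put X = A B, Y = C A and H = Y#. From A B A = A C A one gets Cline's formula X# = A H H B, and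
  U = A Y H, V = H B are mutually reflexive generalized inverses with V U = Y H and X# = U H V.
  So H lives in the corner of the idempotent f = V U, which is Murray-von Neumann equivalent to
  e = U V. Over a Bezout domain every idempotent matrix is equivalent to an identity matrix 1_k,
  since a nonzero idempotent always contains a rank-one idempotent below it; the size k is an
  invariant and is additive on complementary idempotents. Hence 1 - e and 1 - f are equivalent
  too, say via U' and V', and then S = U + U' is invertible with inverse V + V' and
  S H S^-1 = U H V = X#.
*)
theory Submission
  imports Defs "Jordan_Normal_Form.Determinant"
begin

lemma mult_mat_assoc:
  "dim_col A = dim_row B \<Longrightarrow> dim_col B = dim_row C \<Longrightarrow> A * B * C = A * (B * C :: 'a::semiring_0 mat)"
  by (rule assoc_mult_mat[of A "dim_row A" "dim_col A" B "dim_col B" C "dim_col C"]) auto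

section \<open>Group inverses\<close>

lemma is_group_inverseD:
  assumes "M \<in> carrier_mat n n" and "is_group_inverse M X"
  shows "X \<in> carrier_mat n n" and "M * X = X * M" and "X * M * X = X" and "M * X * M = M"
  using assms unfolding is_group_inverse_def by auto

lemma is_group_inverse_absorb:
  assumes M: "M \<in> carrier_mat n n" and X: "is_group_inverse M X"
  shows "X * X * M = X" and "M * X * X = X" and "M * M * X = M" and "X * M * M = M"
proof -
  note g = is_group_inverseD[OF M X]
  have "X * X * M = X * M * X" and "M * X * X = X * M * X"
    using M g(1) by (simp_all add: mult_mat_assoc g(2))
  moreover have "M * M * X = M * X * M" and "X * M * M = M * X * M"
    using M g(1) by (simp_all add: mult_mat_assoc flip: g(2))
  ultimately show "X * X * M = X" and "M * X * X = X" and "M * M * X = M" and "X * M * M = M"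
    using g(3,4) by simp_all
qed

lemma is_group_inverse_unique:
  assumes M: "M \<in> carrier_mat n n" and X: "is_group_inverse M X" and Y: "is_group_inverse M Y"
  shows "X = Y"
proof -
  note gX = is_group_inverseD[OF M X] and gY = is_group_inverseD[OF M Y]
  note c = M gX(1) gY(1)
  have "M * X = X * (M * Y * M)" using gX(2) gY(4) by simp
  also have "\<dots> = (X * M) * (Y * M)" using c by (simp add: mult_mat_assoc)
  also have "\<dots> = (M * X) * (M * Y)" by (simp only: gX(2) gY(2))
  also have "\<dots> = (M * X * M) * Y" using c by (simp add: mult_mat_assoc)
  finally have MX_MY: "M * X = M * Y" by (simp only: gX(4))
  have "X = X * (M * X)" using c gX(3) by (simp add: mult_mat_assoc)
  also have "\<dots> = (X * M) * Y" using c by (simp add: MX_MY mult_mat_assoc)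
  also have "\<dots> = M * Y * Y" by (simp only: MX_MY flip: gX(2))
  finally show ?thesis by (simp only: is_group_inverse_absorb[OF M Y])
qed

lemma group_inv_eqI:
  assumes "M \<in> carrier_mat n n" and "is_group_inverse M X"
  shows "group_inv M = X"
  unfolding group_inv_def using assms is_group_inverse_unique by blast

lemma is_group_inverse_group_inv:
  assumes "M \<in> carrier_mat n n" and "group_invertible M"
  shows "is_group_inverse M (group_inv M)"
  using assms group_inv_eqI unfolding group_invertible_def by metis

lemma is_group_inverse_mult_BA:
  fixes A B C H :: "'a::comm_ring_1 mat"
  assumes c: "A \<in> carrier_mat n n" "B \<in> carrier_mat n n" "C \<in> carrier_mat n n"
    and ABA: "A * B * A = A * C * A" and H: "is_group_inverse (C * A) H"
  shows "H * B * A = H * (C * A)"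
proof -
  have CA: "C * A \<in> carrier_mat n n" using c by simp
  note cH = is_group_inverseD(1)[OF CA H] and HHY = is_group_inverse_absorb(1)[OF CA H]
  have "H * B * A = (H * H * (C * A)) * B * A" by (simp only: HHY)
  also have "\<dots> = H * H * C * (A * B * A)" using c cH by (simp add: mult_mat_assoc)
  also have "\<dots> = H * H * C * (A * C * A)" by (simp only: ABA)
  also have "\<dots> = (H * H * (C * A)) * (C * A)" using c cH by (simp add: mult_mat_assoc)
  finally show ?thesis by (simp only: HHY)
qed

lemma is_group_inverse_cancel_AB:
  fixes A B C H :: "'a::comm_ring_1 mat"
  assumes c: "A \<in> carrier_mat n n" "B \<in> carrier_mat n n" "C \<in> carrier_mat n n"
    and ABA: "A * B * A = A * C * A" and H: "is_group_inverse (C * A) H"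
    and G: "is_group_inverse (A * B) G"
  shows "A * (H * (C * A)) * B = A * B"
proof -
  have CA: "C * A \<in> carrier_mat n n" and AB: "A * B \<in> carrier_mat n n" using c by simp_all
  note abH = is_group_inverse_absorb[OF CA H] and abG = is_group_inverse_absorb[OF AB G]
  note cc = c is_group_inverseD(1)[OF CA H] is_group_inverseD(1)[OF AB G]
  have "A * (H * (C * A)) * B = A * H * C * (A * B)" using cc by (simp add: mult_mat_assoc)
  also have "\<dots> = A * H * C * (A * B * (A * B) * G)" by (simp only: abG(3))
  also have "\<dots> = A * H * C * (A * B * A) * B * G" using cc by (simp add: mult_mat_assoc)
  also have "\<dots> = A * H * C * (A * C * A) * B * G" by (simp only: ABA)
  also have "\<dots> = A * (H * (C * A) * (C * A)) * B * G" using cc by (simp add: mult_mat_assoc)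
  also have "\<dots> = (A * C * A) * B * G" using cc by (simp add: abH(4) mult_mat_assoc)
  also have "\<dots> = (A * B * A) * B * G" by (simp only: ABA)
  also have "\<dots> = A * B * (A * B) * G" using cc by (simp add: mult_mat_assoc)
  finally show ?thesis by (simp only: abG(3))
qed

lemma is_group_inverse_cline:
  fixes A B C H :: "'a::comm_ring_1 mat"
  assumes c: "A \<in> carrier_mat n n" "B \<in> carrier_mat n n" "C \<in> carrier_mat n n"
    and ABA: "A * B * A = A * C * A" and H: "is_group_inverse (C * A) H"
    and AB: "group_invertible (A * B)"
  shows "is_group_inverse (A * B) (A * H * H * B)"
proof -
  have CA: "C * A \<in> carrier_mat n n" using c by simp
  obtain G where G: "is_group_inverse (A * B) G" using AB unfolding group_invertible_def by blast
  note gH = is_group_inverseD[OF CA H] and abH = is_group_inverse_absorb[OF CA H]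
  note BA = is_group_inverse_mult_BA[OF c ABA H]
  note cc = c gH(1)
  have XZ: "A * B * (A * H * H * B) = A * H * B"
  proof -
    have "A * B * (A * H * H * B) = (A * B * A) * (H * H * B)" using cc by (simp add: mult_mat_assoc)
    also have "\<dots> = (A * C * A) * (H * H * B)" by (simp only: ABA)
    also have "\<dots> = A * (C * A * H * H) * B" using cc by (simp add: mult_mat_assoc)
    finally show ?thesis by (simp only: abH(2))
  qed
  have ZX: "A * H * H * B * (A * B) = A * H * B"
  proof -
    have "A * H * H * B * (A * B) = A * H * (H * B * A) * B" using cc by (simp add: mult_mat_assoc)
    also have "\<dots> = A * H * (H * (C * A)) * B" by (simp only: BA)
    also have "\<dots> = A * (H * H * (C * A)) * B" using cc by (simp add: mult_mat_assoc)
    finally show ?thesis by (simp only: abH(1))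
  qed
  have ZXZ: "A * H * H * B * (A * B) * (A * H * H * B) = A * H * H * B"
  proof -
    have "A * H * H * B * (A * B) * (A * H * H * B) = A * H * B * (A * H * H * B)"
      by (simp only: ZX)
    also have "\<dots> = A * (H * B * A) * H * H * B" using cc by (simp add: mult_mat_assoc)
    also have "\<dots> = A * (H * (C * A)) * H * H * B" by (simp only: BA)
    also have "\<dots> = A * (H * (C * A) * H) * H * B" using cc by (simp add: mult_mat_assoc)
    finally show ?thesis by (simp only: gH(3))
  qed
  have XZX: "A * B * (A * H * H * B) * (A * B) = A * B"
  proof -
    have "A * B * (A * H * H * B) * (A * B) = A * H * B * (A * B)" by (simp only: XZ)
    also have "\<dots> = A * (H * B * A) * B" using cc by (simp add: mult_mat_assoc)
    also have "\<dots> = A * (H * (C * A)) * B" by (simp only: BA)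
    finally show ?thesis by (simp only: is_group_inverse_cancel_AB[OF c ABA H G])
  qed
  have "A * H * H * B \<in> carrier_mat n n" using cc by (metis mult_carrier_mat)
  moreover have "dim_row A = n" "dim_col B = n" using c by auto
  ultimately show ?thesis
    unfolding is_group_inverse_def using XZ ZX ZXZ XZX by simp
qed

lemma group_inverse_sandwich:
  fixes A B C H :: "'a::comm_ring_1 mat"
  assumes c: "A \<in> carrier_mat n n" "B \<in> carrier_mat n n" "C \<in> carrier_mat n n"
    and ABA: "A * B * A = A * C * A" and H: "is_group_inverse (C * A) H"
  defines "U \<equiv> A * (C * A) * H" and "V \<equiv> H * B"
  shows "V * U = C * A * H" and "U * V * U = U" and "V * U * V = V"
    and "U * H * V = A * H * H * B"
proof -
  have CA: "C * A \<in> carrier_mat n n" using c by simp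
  note gH = is_group_inverseD[OF CA H] and abH = is_group_inverse_absorb[OF CA H]
  note cc = c gH(1)
  have cU: "U \<in> carrier_mat n n" and cV: "V \<in> carrier_mat n n"
    unfolding U_def V_def using cc by (metis mult_carrier_mat)+
  have "V * U = (H * B * A) * (C * A) * H" unfolding U_def V_def using cc by (simp add: mult_mat_assoc)
  also have "\<dots> = H * (C * A) * (C * A) * H" by (simp only: is_group_inverse_mult_BA[OF c ABA H])
  finally show VU: "V * U = C * A * H" by (simp only: abH(4))
  have "U * V * U = U * (V * U)" using cU cV by (simp add: mult_mat_assoc)
  also have "\<dots> = U * (C * A * H)" by (simp only: VU)
  also have "\<dots> = A * (C * A * H * (C * A)) * H" unfolding U_def using cc by (simp add: mult_mat_assoc)
  finally show "U * V * U = U" by (simp only: gH(4) U_def)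
  have "V * U * V = C * A * H * V" by (simp only: VU)
  also have "\<dots> = (C * A * H * H) * B" unfolding V_def using cc by (simp add: mult_mat_assoc)
  finally show "V * U * V = V" by (simp only: abH(2) V_def)
  have "U * H * V = A * (C * A * H * H) * H * B" unfolding U_def V_def using cc by (simp add: mult_mat_assoc)
  then show "U * H * V = A * H * H * B" by (simp only: abH(2))
qed

section \<open>Murray--von Neumann equivalence of idempotent matrices\<close>

lemma four_block_mat_empty:
  "E \<in> carrier_mat n m \<Longrightarrow> four_block_mat E (0\<^sub>m n 0) (0\<^sub>m 0 m) (0\<^sub>m 0 0) = E"
  by (intro eq_matI) auto

lemma one_mat_factor_dim_le:
  fixes P :: "'a::idom mat"
  assumes P: "P \<in> carrier_mat a b" and Q: "Q \<in> carrier_mat b a" and PQ: "P * Q = 1\<^sub>m a"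
  shows "a \<le> b"
proof (rule ccontr)
  assume "\<not> a \<le> b"
  then have ba: "b < a" by simp
  define P' where "P' = four_block_mat P (0\<^sub>m a (a - b)) (0\<^sub>m 0 b) (0\<^sub>m 0 (a - b))"
  define Q' where "Q' = four_block_mat Q (0\<^sub>m b 0) (0\<^sub>m (a - b) a) (0\<^sub>m (a - b) 0)"
  have "P' \<in> carrier_mat (a + 0) (b + (a - b))" and "Q' \<in> carrier_mat (b + (a - b)) (a + 0)"
    unfolding P'_def Q'_def using P Q by auto
  then have cP': "P' \<in> carrier_mat a a" and cQ': "Q' \<in> carrier_mat a a" using ba by auto
  have "P' * Q' = four_block_mat
      (P * Q + 0\<^sub>m a (a - b) * 0\<^sub>m (a - b) a) (P * 0\<^sub>m b 0 + 0\<^sub>m a (a - b) * 0\<^sub>m (a - b) 0)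
      (0\<^sub>m 0 b * Q + 0\<^sub>m 0 (a - b) * 0\<^sub>m (a - b) a) (0\<^sub>m 0 b * 0\<^sub>m b 0 + 0\<^sub>m 0 (a - b) * 0\<^sub>m (a - b) 0)"
    unfolding P'_def Q'_def using P Q by (intro mult_four_block_mat) auto
  also have "\<dots> = 1\<^sub>m a" using P Q PQ four_block_mat_empty[of "1\<^sub>m a" a a] by simp
  finally have "det P' * det Q' = 1" using det_mult[OF cP' cQ'] by simp
  moreover have "det P' = 0"
  proof -
    have "P' *\<^sub>v unit_vec a (a - 1) = 0\<^sub>v a"
    proof (rule eq_vecI)
      fix i assume "i < dim_vec (0\<^sub>v a :: 'a vec)"
      then have i: "i < a" by simp
      have "(P' *\<^sub>v unit_vec a (a - 1)) $ i = P' $$ (i, a - 1)" using i cP' ba by simp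
      also have "\<dots> = 0" unfolding P'_def using i ba P by simp
      finally show "(P' *\<^sub>v unit_vec a (a - 1)) $ i = 0\<^sub>v a $ i" using i by simp
    qed (use cP' in simp)
    then show ?thesis
      using ba by (subst det_0_iff_vec_prod_zero[OF cP']) (auto intro!: exI[of _ "unit_vec a (a - 1)"])
  qed
  ultimately show False by simp
qed

lemma mult_zero_mat_by_orthogonal:
  fixes X :: "'a::semiring_0 mat"
  assumes X: "X \<in> carrier_mat a n" and Y: "Y \<in> carrier_mat n b" and p: "p \<in> carrier_mat n n"
    and q: "q \<in> carrier_mat n n" and Xp: "X * p = X" and qY: "q * Y = Y" and pq: "p * q = 0\<^sub>m n n"
  shows "X * Y = 0\<^sub>m a b"
proof -
  have "X * Y = (X * p) * (q * Y)" by (simp only: Xp qY)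
  also have "\<dots> = X * (p * q) * Y" using X Y p q by (simp add: mult_mat_assoc)
  finally show ?thesis using X Y by (simp add: pq)
qed

lemma minus_zero_mat [simp]: "A \<in> carrier_mat nr nc \<Longrightarrow> A - 0\<^sub>m nr nc = (A :: 'a::group_add mat)"
  by (intro eq_matI) auto

lemma mat_diff_eq_zero_imp_eq:
  fixes A :: "'a::ab_group_add mat"
  assumes "A \<in> carrier_mat nr nc" and "B \<in> carrier_mat nr nc" and "A - B = 0\<^sub>m nr nc"
  shows "A = B"
proof (rule eq_matI)
  fix i j assume "i < dim_row B" "j < dim_col B"
  then have "A $$ (i, j) - B $$ (i, j) = (A - B) $$ (i, j)" using assms(1,2) by simp
  also have "\<dots> = 0" using assms \<open>i < dim_row B\<close> \<open>j < dim_col B\<close> by simp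
  finally show "A $$ (i, j) = B $$ (i, j)" by simp
qed (use assms in auto)

lemma idempotent_diff:
  fixes e :: "'a::comm_ring_1 mat"
  assumes e: "e \<in> carrier_mat n n" and p: "p \<in> carrier_mat n n"
    and ee: "e * e = e" and pp: "p * p = p" and ep: "e * p = p" and pe: "p * e = p"
  shows "e * (e - p) = e - p" and "(e - p) * e = e - p"
    and "p * (e - p) = 0\<^sub>m n n" and "(e - p) * p = 0\<^sub>m n n"
    and "(e - p) * (e - p) = e - p"
proof -
  show e_ep: "e * (e - p) = e - p" using e p by (simp add: mult_minus_distrib_mat ee ep)
  show "(e - p) * e = e - p" using e p by (simp add: minus_mult_distrib_mat ee pe)
  show p_ep: "p * (e - p) = 0\<^sub>m n n" using e p by (simp add: mult_minus_distrib_mat pp pe)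
  show "(e - p) * p = 0\<^sub>m n n" using e p by (simp add: minus_mult_distrib_mat pp ep)
  have "(e - p) * (e - p) = e * (e - p) - p * (e - p)"
    using e p by (intro minus_mult_distrib_mat) auto
  then show "(e - p) * (e - p) = e - p" using minus_carrier_mat[OF p] by (simp add: e_ep p_ep)
qed

lemma idempotent_compl:
  fixes e :: "'a::comm_ring_1 mat"
  assumes e: "e \<in> carrier_mat n n" and ee: "e * e = e"
  shows "(1\<^sub>m n - e) * (1\<^sub>m n - e) = 1\<^sub>m n - e" and "e * (1\<^sub>m n - e) = 0\<^sub>m n n"
    and "(1\<^sub>m n - e) * e = 0\<^sub>m n n"
  using idempotent_diff(5,3,4)[OF one_carrier_mat e _ ee] e by simp_all

definition mvn_equiv :: "'a::semiring_0 mat \<Rightarrow> 'a mat \<Rightarrow> bool" where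
  "mvn_equiv e f \<longleftrightarrow> (\<exists>U V. U \<in> carrier_mat (dim_row e) (dim_row f) \<and>
     V \<in> carrier_mat (dim_row f) (dim_row e) \<and> U * V = e \<and> V * U = f \<and> U * V * U = U \<and> V * U * V = V)"

lemma mvn_equivI:
  assumes "U \<in> carrier_mat n m" and "V \<in> carrier_mat m n" and "U * V = e" and "V * U = f"
    and "U * V * U = U" and "V * U * V = V"
  shows "mvn_equiv e f"
proof -
  have "dim_row e = n" and "dim_row f = m" using assms(1-4) by auto
  then show ?thesis unfolding mvn_equiv_def using assms by auto
qed

lemma mvn_equivE:
  assumes "mvn_equiv e f" and "e \<in> carrier_mat n n" and "f \<in> carrier_mat m m"
  obtains U V where "U \<in> carrier_mat n m" and "V \<in> carrier_mat m n" and "U * V = e" and "V * U = f"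
    and "e * U = U" and "U * f = U" and "f * V = V" and "V * e = V"
proof -
  obtain U V where U: "U \<in> carrier_mat n m" and V: "V \<in> carrier_mat m n"
    and UV: "U * V = e" and VU: "V * U = f" and UVU: "U * V * U = U" and VUV: "V * U * V = V"
    using assms unfolding mvn_equiv_def by auto
  have "U * f = U" and "e * U = U" using U V UVU by (simp_all add: mult_mat_assoc flip: UV VU)
  moreover have "V * e = V" and "f * V = V" using U V VUV by (simp_all add: mult_mat_assoc flip: UV VU)
  ultimately show thesis using that U V UV VU by blast
qed

lemma mvn_equiv_sym:
  assumes "mvn_equiv e f"
  shows "mvn_equiv f e"
proof -
  obtain U V where "U \<in> carrier_mat (dim_row e) (dim_row f)" and "V \<in> carrier_mat (dim_row f) (dim_row e)"
    and "U * V = e" and "V * U = f" and "U * V * U = U" and "V * U * V = V"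
    using assms unfolding mvn_equiv_def by blast
  then show ?thesis by (intro mvn_equivI[of V "dim_row f" "dim_row e" U])
qed

lemma mvn_equiv_idem:
  assumes "mvn_equiv e f" and "e \<in> carrier_mat n n"
  shows "e * e = e"
proof -
  obtain U V where UV: "U * V = e" and UVU: "U * V * U = U"
    and U: "U \<in> carrier_mat (dim_row e) (dim_row f)" and V: "V \<in> carrier_mat (dim_row f) (dim_row e)"
    using assms(1) unfolding mvn_equiv_def by blast
  have "e * e = U * V * (U * V)" by (simp only: UV)
  also have "\<dots> = (U * V * U) * V" using U V by (simp add: mult_mat_assoc)
  finally have "e * e = U * V" by (simp only: UVU)
  then show ?thesis by (simp only: UV)
qed

lemma mvn_equiv_trans:
  assumes ef: "mvn_equiv e f" and fg: "mvn_equiv f g"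
    and e: "e \<in> carrier_mat n n" and f: "f \<in> carrier_mat m m" and g: "g \<in> carrier_mat k k"
  shows "mvn_equiv e g"
proof -
  obtain U1 V1 where U1: "U1 \<in> carrier_mat n m" and V1: "V1 \<in> carrier_mat m n"
    and UV1: "U1 * V1 = e" and VU1: "V1 * U1 = f" and eU1: "e * U1 = U1" and U1f: "U1 * f = U1"
    using mvn_equivE[OF ef e f] by blast
  obtain U2 V2 where U2: "U2 \<in> carrier_mat m k" and V2: "V2 \<in> carrier_mat k m"
    and UV2: "U2 * V2 = f" and VU2: "V2 * U2 = g" and gV2: "g * V2 = V2" and V2f: "V2 * f = V2"
    using mvn_equivE[OF fg f g] by blast
  have "U1 * U2 * (V2 * V1) = U1 * f * V1" using U1 U2 V1 V2 by (simp add: mult_mat_assoc flip: UV2)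
  then have UV: "U1 * U2 * (V2 * V1) = e" by (simp only: U1f UV1)
  have "V2 * V1 * (U1 * U2) = V2 * f * U2" using U1 U2 V1 V2 by (simp add: mult_mat_assoc flip: VU1)
  then have VU: "V2 * V1 * (U1 * U2) = g" by (simp only: V2f VU2)
  show ?thesis
  proof (rule mvn_equivI[of "U1 * U2" n k "V2 * V1"])
    have "U1 * U2 * (V2 * V1) * (U1 * U2) = (e * U1) * U2" using e U1 U2 by (simp add: UV mult_mat_assoc)
    then show "U1 * U2 * (V2 * V1) * (U1 * U2) = U1 * U2" by (simp only: eU1)
    have "V2 * V1 * (U1 * U2) * (V2 * V1) = (g * V2) * V1" using g V1 V2 by (simp add: VU mult_mat_assoc)
    then show "V2 * V1 * (U1 * U2) * (V2 * V1) = V2 * V1" by (simp only: gV2)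
  qed (use U1 U2 V1 V2 UV VU in auto)
qed

lemma mvn_equiv_one_mat_le:
  fixes e :: "'a::idom mat"
  assumes "mvn_equiv e (1\<^sub>m k)" and "e \<in> carrier_mat n n"
  shows "k \<le> n"
proof -
  obtain U V :: "'a mat" where U: "U \<in> carrier_mat n k" and V: "V \<in> carrier_mat k n"
    and VU: "V * U = 1\<^sub>m k" using mvn_equivE[OF assms one_carrier_mat] by blast
  show ?thesis by (rule one_mat_factor_dim_le[OF V U VU])
qed

lemma mvn_equiv_one_mat_eq:
  assumes "mvn_equiv (1\<^sub>m k :: 'a::idom mat) (1\<^sub>m l)"
  shows "k = l"
proof -
  have "l \<le> k" by (rule mvn_equiv_one_mat_le[OF assms one_carrier_mat])
  moreover have "k \<le> l" by (rule mvn_equiv_one_mat_le[OF mvn_equiv_sym[OF assms] one_carrier_mat])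
  ultimately show ?thesis by simp
qed

lemma mvn_equiv_one_mat_add:
  fixes e e' :: "'a::comm_ring_1 mat"
  assumes e1: "mvn_equiv e (1\<^sub>m k)" and e2: "mvn_equiv e' (1\<^sub>m l)"
    and e: "e \<in> carrier_mat n n" and e': "e' \<in> carrier_mat n n"
    and orth1: "e * e' = 0\<^sub>m n n" and orth2: "e' * e = 0\<^sub>m n n"
  shows "mvn_equiv (e + e') (1\<^sub>m (k + l))"
proof -
  obtain U1 V1 where U1: "U1 \<in> carrier_mat n k" and V1: "V1 \<in> carrier_mat k n"
    and UV1: "U1 * V1 = e" and VU1: "V1 * U1 = 1\<^sub>m k" and eU1: "e * U1 = U1" and V1e: "V1 * e = V1"
    using mvn_equivE[OF e1 e one_carrier_mat] by blast
  obtain U2 V2 where U2: "U2 \<in> carrier_mat n l" and V2: "V2 \<in> carrier_mat l n"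
    and UV2: "U2 * V2 = e'" and VU2: "V2 * U2 = 1\<^sub>m l" and eU2: "e' * U2 = U2" and V2e: "V2 * e' = V2"
    using mvn_equivE[OF e2 e' one_carrier_mat] by blast
  have V1U2: "V1 * U2 = 0\<^sub>m k l" by (rule mult_zero_mat_by_orthogonal[OF V1 U2 e e' V1e eU2 orth1])
  have V2U1: "V2 * U1 = 0\<^sub>m l k" by (rule mult_zero_mat_by_orthogonal[OF V2 U1 e' e V2e eU1 orth2])
  define P where "P = four_block_mat U1 U2 (0\<^sub>m 0 k) (0\<^sub>m 0 l)"
  define Q where "Q = four_block_mat V1 (0\<^sub>m k 0) V2 (0\<^sub>m l 0)"
  have "P \<in> carrier_mat (n + 0) (k + l)" unfolding P_def using U1 U2 by auto
  then have P: "P \<in> carrier_mat n (k + l)" by simp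
  have "Q \<in> carrier_mat (k + l) (n + 0)" unfolding Q_def using V1 V2 by auto
  then have Q: "Q \<in> carrier_mat (k + l) n" by simp
  have "P * Q = four_block_mat (U1 * V1 + U2 * V2) (U1 * 0\<^sub>m k 0 + U2 * 0\<^sub>m l 0)
      (0\<^sub>m 0 k * V1 + 0\<^sub>m 0 l * V2) (0\<^sub>m 0 k * 0\<^sub>m k 0 + 0\<^sub>m 0 l * 0\<^sub>m l 0)"
    unfolding P_def Q_def using U1 U2 V1 V2 by (intro mult_four_block_mat) auto
  also have "\<dots> = e + e'"
    using U1 U2 V1 V2 e e' four_block_mat_empty[of "e + e'" n n] by (simp add: UV1 UV2)
  finally have PQ: "P * Q = e + e'" .
  have "Q * P = four_block_mat (V1 * U1 + 0\<^sub>m k 0 * 0\<^sub>m 0 k) (V1 * U2 + 0\<^sub>m k 0 * 0\<^sub>m 0 l)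
      (V2 * U1 + 0\<^sub>m l 0 * 0\<^sub>m 0 k) (V2 * U2 + 0\<^sub>m l 0 * 0\<^sub>m 0 l)"
    unfolding P_def Q_def using U1 U2 V1 V2 by (intro mult_four_block_mat) auto
  also have "\<dots> = 1\<^sub>m (k + l)" by (simp add: VU1 VU2 V1U2 V2U1)
  finally have QP: "Q * P = 1\<^sub>m (k + l)" .
  show ?thesis
  proof (rule mvn_equivI[OF P Q PQ QP])
    show "P * Q * P = P" using P Q by (simp add: mult_mat_assoc QP)
    show "Q * P * Q = Q" using Q by (simp add: QP)
  qed
qed

lemma mvn_equiv_one_mat_compl:
  fixes e :: "'a::idom mat"
  assumes "mvn_equiv e (1\<^sub>m k)" and "mvn_equiv (1\<^sub>m n - e) (1\<^sub>m l)" and e: "e \<in> carrier_mat n n"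
  shows "k + l = n"
proof -
  have e1: "1\<^sub>m n - e \<in> carrier_mat n n" using e by (simp add: minus_carrier_mat)
  note compl = idempotent_compl[OF e mvn_equiv_idem[OF assms(1) e]]
  have "mvn_equiv (e + (1\<^sub>m n - e)) (1\<^sub>m (k + l))"
    by (rule mvn_equiv_one_mat_add[OF assms(1,2) e e1 compl(2,3)])
  moreover have "e + (1\<^sub>m n - e) = 1\<^sub>m n" using e by (intro eq_matI) auto
  ultimately have "mvn_equiv (1\<^sub>m n) (1\<^sub>m (k + l) :: 'a mat)" by simp
  then show ?thesis using mvn_equiv_one_mat_eq by metis
qed

lemma mvn_equiv_compl_witnesses:
  fixes U V :: "'a::comm_ring_1 mat"
  assumes U: "U \<in> carrier_mat n n" and V: "V \<in> carrier_mat n n"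
    and UVU: "U * V * U = U" and VUV: "V * U * V = V"
    and compl: "mvn_equiv (1\<^sub>m n - U * V) (1\<^sub>m n - V * U)"
  obtains U' V' where "U' \<in> carrier_mat n n" and "V' \<in> carrier_mat n n"
    and "U' * V' = 1\<^sub>m n - U * V" and "V' * U' = 1\<^sub>m n - V * U"
    and "U * V' = 0\<^sub>m n n" and "U' * V = 0\<^sub>m n n" and "V * U' = 0\<^sub>m n n" and "V' * U = 0\<^sub>m n n"
proof -
  define e where "e = U * V"
  define f where "f = V * U"
  have e: "e \<in> carrier_mat n n" and f: "f \<in> carrier_mat n n" unfolding e_def f_def using U V by auto
  have e': "1\<^sub>m n - e \<in> carrier_mat n n" and f': "1\<^sub>m n - f \<in> carrier_mat n n"
    using e f by (simp_all add: minus_carrier_mat)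
  have ef: "mvn_equiv e f" by (rule mvn_equivI[OF U V e_def[symmetric] f_def[symmetric] UVU VUV])
  have eU: "e * U = U" and fV: "f * V = V" unfolding e_def f_def by (fact UVU VUV)+
  have Uf: "U * f = U" and Ve: "V * e = V"
    unfolding e_def f_def using U V UVU VUV by (simp_all add: mult_mat_assoc)
  obtain U' V' where U': "U' \<in> carrier_mat n n" and V': "V' \<in> carrier_mat n n"
    and UV': "U' * V' = 1\<^sub>m n - e" and VU': "V' * U' = 1\<^sub>m n - f"
    and eU': "(1\<^sub>m n - e) * U' = U'" and U'f: "U' * (1\<^sub>m n - f) = U'"
    and fV': "(1\<^sub>m n - f) * V' = V'" and V'e: "V' * (1\<^sub>m n - e) = V'"
    using mvn_equivE[OF compl[folded e_def f_def] e' f'] by blast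
  note orth_e = idempotent_compl(2,3)[OF e mvn_equiv_idem[OF ef e]]
  note orth_f = idempotent_compl(2,3)[OF f mvn_equiv_idem[OF mvn_equiv_sym[OF ef] f]]
  have "U * V' = 0\<^sub>m n n" using mult_zero_mat_by_orthogonal[OF U V' f f' Uf fV'] orth_f by simp
  moreover have "U' * V = 0\<^sub>m n n" using mult_zero_mat_by_orthogonal[OF U' V f' f U'f fV] orth_f by simp
  moreover have "V * U' = 0\<^sub>m n n" using mult_zero_mat_by_orthogonal[OF V U' e e' Ve eU'] orth_e by simp
  moreover have "V' * U = 0\<^sub>m n n" using mult_zero_mat_by_orthogonal[OF V' U e' e V'e eU] orth_e by simp
  ultimately show thesis using that U' V' UV' VU' unfolding e_def f_def by blast
qed

lemma mvn_equiv_compl_inverse: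
  fixes U V :: "'a::comm_ring_1 mat"
  assumes U: "U \<in> carrier_mat n n" and V: "V \<in> carrier_mat n n"
    and UVU: "U * V * U = U" and VUV: "V * U * V = V"
    and compl: "mvn_equiv (1\<^sub>m n - U * V) (1\<^sub>m n - V * U)"
  shows "\<exists>S T. S \<in> carrier_mat n n \<and> T \<in> carrier_mat n n \<and> S * T = 1\<^sub>m n \<and> T * S = 1\<^sub>m n \<and>
    S * (V * U) = U \<and> V * U * T = V"
proof -
  obtain U' V' where U': "U' \<in> carrier_mat n n" and V': "V' \<in> carrier_mat n n"
    and UV': "U' * V' = 1\<^sub>m n - U * V" and VU': "V' * U' = 1\<^sub>m n - V * U"
    and UV'0: "U * V' = 0\<^sub>m n n" and U'V0: "U' * V = 0\<^sub>m n n"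
    and VU'0: "V * U' = 0\<^sub>m n n" and V'U0: "V' * U = 0\<^sub>m n n"
    using mvn_equiv_compl_witnesses[OF U V UVU VUV compl] by blast
  define S where "S = U + U'"
  define T where "T = V + V'"
  have S: "S \<in> carrier_mat n n" and T: "T \<in> carrier_mat n n" unfolding S_def T_def using U U' V V' by auto
  have "S * T = U * T + U' * T" unfolding S_def by (rule add_mult_distrib_mat[OF U U' T])
  also have "U * T = U * V + U * V'" unfolding T_def by (rule mult_add_distrib_mat[OF U V V'])
  also have "U' * T = U' * V + U' * V'" unfolding T_def by (rule mult_add_distrib_mat[OF U' V V'])
  also have "U * V + U * V' + (U' * V + U' * V') = 1\<^sub>m n"
    using U V by (intro eq_matI) (auto simp: UV'0 U'V0 UV')
  finally have ST: "S * T = 1\<^sub>m n" .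
  have "T * S = V * S + V' * S" unfolding T_def by (rule add_mult_distrib_mat[OF V V' S])
  also have "V * S = V * U + V * U'" unfolding S_def by (rule mult_add_distrib_mat[OF V U U'])
  also have "V' * S = V' * U + V' * U'" unfolding S_def by (rule mult_add_distrib_mat[OF V' U U'])
  also have "V * U + V * U' + (V' * U + V' * U') = 1\<^sub>m n"
    using U V by (intro eq_matI) (auto simp: VU'0 V'U0 VU')
  finally have TS: "T * S = 1\<^sub>m n" .
  have "S * (V * U) = U * (V * U) + U' * (V * U)"
    unfolding S_def using U U' V by (intro add_mult_distrib_mat) auto
  also have "\<dots> = U * V * U + U' * V * U" using U U' V by (simp add: mult_mat_assoc)
  finally have Sf: "S * (V * U) = U" using U by (simp add: UVU U'V0)
  have "V * U * T = V * U * V + V * U * V'"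
    unfolding T_def using U V V' by (intro mult_add_distrib_mat) auto
  also have "\<dots> = V * U * V + V * (U * V')" using U V V' by (simp add: mult_mat_assoc)
  finally have "V * U * T = V" using V by (simp add: VUV UV'0)
  with S T ST TS Sf show ?thesis by blast
qed

lemma similar_mat_sandwich:
  fixes U V H :: "'a::comm_ring_1 mat"
  assumes U: "U \<in> carrier_mat n n" and V: "V \<in> carrier_mat n n" and H: "H \<in> carrier_mat n n"
    and UVU: "U * V * U = U" and VUV: "V * U * V = V"
    and compl: "mvn_equiv (1\<^sub>m n - U * V) (1\<^sub>m n - V * U)"
    and fH: "V * U * H = H" and Hf: "H * (V * U) = H"
  shows "similar_mat (U * H * V) H"
proof -
  obtain S T where S: "S \<in> carrier_mat n n" and T: "T \<in> carrier_mat n n"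
    and ST: "S * T = 1\<^sub>m n" and TS: "T * S = 1\<^sub>m n" and Sf: "S * (V * U) = U" and fT: "V * U * T = V"
    using mvn_equiv_compl_inverse[OF U V UVU VUV compl] by blast
  have "U * H * V = S * (V * U) * H * (V * U * T)" by (simp only: Sf fT)
  also have "\<dots> = S * (V * U * H * (V * U)) * T" using S T U V H by (simp add: mult_mat_assoc)
  finally have "U * H * V = S * H * T" by (simp only: fH Hf)
  then have "similar_mat_wit (U * H * V) H S T"
    unfolding similar_mat_wit_def Let_def using U V H S T ST TS by auto
  then show ?thesis unfolding similar_mat_def by blast
qed

section \<open>Idempotent matrices over a Bezout domain\<close>

lemma gen_ideal_member:
  assumes "finite S" and "x \<in> S"
  shows "x \<in> gen_ideal S"
proof -
  have "(\<Sum>y\<in>S. (if y = x then 1 else 0) * y) = (\<Sum>y\<in>S. if y = x then x else 0)"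
    by (rule sum.cong) auto
  also have "\<dots> = x" using assms by simp
  finally have "(\<Sum>y\<in>S. (if y = x then 1 else 0) * y) = x" .
  then show ?thesis
    unfolding gen_ideal_def by (intro CollectI exI[of _ "\<lambda>y. if y = x then 1 else 0"]) simp
qed

lemma bezout_domain_gcd:
  fixes a b :: "'a::idom"
  assumes "bezout_domain TYPE('a)"
  shows "\<exists>d s t. d = s * a + t * b \<and> d dvd a \<and> d dvd b"
proof -
  have "finite {a, b}" by simp
  then obtain d where d: "gen_ideal {a, b} = {r * d | r. True}"
    using assms unfolding bezout_domain_def by blast
  have "d \<in> gen_ideal {a, b}" unfolding d by (rule CollectI, rule exI[of _ 1]) simp
  then obtain f where "d = (\<Sum>x\<in>{a, b}. f x * x)" unfolding gen_ideal_def by blast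
  then have "d = f a * a + (if a = b then 0 else f b) * b" by (cases "a = b") simp_all
  moreover have "d dvd x" if x: "x \<in> {a, b}" for x
  proof -
    obtain r where "x = r * d" using gen_ideal_member[OF \<open>finite {a, b}\<close> x] unfolding d by blast
    then show ?thesis by simp
  qed
  ultimately show ?thesis
    by (intro exI[of _ d] exI[of _ "f a"] exI[of _ "if a = b then 0 else f b"]) auto
qed

lemma bezout_domain_sum:
  fixes a :: "nat \<Rightarrow> 'a::idom"
  assumes "bezout_domain TYPE('a)"
  shows "\<exists>d c. d = (\<Sum>i<m. c i * a i) \<and> (\<forall>i<m. d dvd a i)"
proof (induction m)
  case 0
  show ?case by simp
next
  case (Suc m)
  then obtain d c where dc: "d = (\<Sum>i<m. c i * a i)" and dvd: "\<forall>i<m. d dvd a i" by blast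
  obtain e s t where e: "e = s * d + t * a m" and ed: "e dvd d" and em: "e dvd a m"
    using bezout_domain_gcd[OF assms] by blast
  have "e dvd a i" if "i < Suc m" for i
  proof (cases "i < m")
    case True
    then show ?thesis using dvd_trans[OF ed] dvd by blast
  next
    case False
    then show ?thesis using that em by (simp add: less_Suc_eq)
  qed
  moreover have "e = (\<Sum>i<Suc m. (if i < m then s * c i else t) * a i)"
  proof -
    have "(\<Sum>i<m. (if i < m then s * c i else t) * a i) = s * d"
      unfolding dc sum_distrib_left by (rule sum.cong) (simp_all add: mult.assoc)
    then show ?thesis unfolding e by simp
  qed
  ultimately show ?case by (intro exI[of _ e] exI[of _ "\<lambda>i. if i < m then s * c i else t"]) simp
qed

lemma bezout_unimodular_factorization:
  fixes a :: "nat \<Rightarrow> 'a::idom"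
  assumes bz: "bezout_domain TYPE('a)" and i: "i < n" and ai: "a i \<noteq> 0"
  shows "\<exists>d r c. d \<noteq> 0 \<and> (\<forall>l<n. a l = d * r l) \<and> (\<Sum>l<n. c l * r l) = 1"
proof -
  obtain d c where dc: "d = (\<Sum>l<n. c l * a l)" and dvd: "\<forall>l<n. d dvd a l"
    using bezout_domain_sum[OF bz] by blast
  have d0: "d \<noteq> 0" using dvd i ai by auto
  define r where "r l = (SOME q. a l = d * q)" for l
  have r: "a l = d * r l" if "l < n" for l
  proof -
    have "\<exists>q. a l = d * q" using dvd that by (auto simp: dvd_def)
    then show ?thesis unfolding r_def by (rule someI_ex)
  qed
  have "d * (\<Sum>l<n. c l * r l) = d * 1"
    using dc by (simp add: sum_distrib_left r mult.left_commute)
  then have "(\<Sum>l<n. c l * r l) = 1" using d0 by simp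
  with d0 r show ?thesis by blast
qed

text \<open>Write a nonzero column of \<open>E\<close> as \<open>d r\<close> with \<open>r\<close> unimodular; cancelling \<open>d\<close> in
  \<open>E (d r) = d r\<close> shows that \<open>r\<close> is fixed by \<open>E\<close>.\<close>
lemma bezout_idempotent_unimodular_column:
  fixes E :: "'a::idom mat"
  assumes bz: "bezout_domain TYPE('a)" and E: "E \<in> carrier_mat n n" and EE: "E * E = E"
    and nz: "E \<noteq> 0\<^sub>m n n"
  shows "\<exists>W F. W \<in> carrier_mat n 1 \<and> F \<in> carrier_mat 1 n \<and> E * W = W \<and> F * W = 1\<^sub>m 1"
proof -
  have "\<exists>i<n. \<exists>j<n. E $$ (i, j) \<noteq> 0"
  proof (rule ccontr)
    assume "\<not> ?thesis"
    then have "E = 0\<^sub>m n n" using E by (intro eq_matI) auto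
    with nz show False ..
  qed
  then obtain i j where i: "i < n" and j: "j < n" and Eij: "E $$ (i, j) \<noteq> 0" by blast
  obtain d r c where d0: "d \<noteq> 0" and r: "\<forall>l<n. E $$ (l, j) = d * r l"
    and cr: "(\<Sum>l<n. c l * r l) = 1"
    using bezout_unimodular_factorization[OF bz i, of "\<lambda>l. E $$ (l, j)"] Eij by blast
  define W where "W = mat n 1 (\<lambda>(l, _). r l)"
  define F where "F = mat 1 n (\<lambda>(_, l). c l)"
  have W: "W \<in> carrier_mat n 1" and F: "F \<in> carrier_mat 1 n" unfolding W_def F_def by auto
  have FW: "F * W = 1\<^sub>m 1"
    unfolding F_def W_def using cr by (intro eq_matI) (auto simp: scalar_prod_def atLeast0LessThan)
  have "E * W = W"
  proof (rule eq_matI)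
    fix i' j' assume "i' < dim_row W" "j' < dim_col W"
    then have i': "i' < n" and j': "j' = 0" using W by auto
    have "d * (\<Sum>l<n. E $$ (i', l) * r l) = (\<Sum>l<n. E $$ (i', l) * E $$ (l, j))"
      unfolding sum_distrib_left by (rule sum.cong) (simp_all add: r mult.left_commute)
    also have "\<dots> = (E * E) $$ (i', j)" using E i' j by (simp add: scalar_prod_def atLeast0LessThan)
    also have "\<dots> = d * r i'" using EE r i' by simp
    finally have "(\<Sum>l<n. E $$ (i', l) * r l) = r i'" using d0 by simp
    then show "(E * W) $$ (i', j') = W $$ (i', j')"
      using E i' j' unfolding W_def by (simp add: scalar_prod_def atLeast0LessThan)
  qed (use E W in auto)
  with W F FW show ?thesis by blast
qed

lemma bezout_rank_one_subidempotent:
  fixes E :: "'a::idom mat"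
  assumes bz: "bezout_domain TYPE('a)" and E: "E \<in> carrier_mat n n" and EE: "E * E = E"
    and nz: "E \<noteq> 0\<^sub>m n n"
  shows "\<exists>q. q \<in> carrier_mat n n \<and> mvn_equiv q (1\<^sub>m 1) \<and> E * q = q \<and> q * E = q"
proof -
  obtain W F where W: "W \<in> carrier_mat n 1" and F: "F \<in> carrier_mat 1 n"
    and EW: "E * W = W" and FW: "F * W = 1\<^sub>m 1"
    using bezout_idempotent_unimodular_column[OF bz E EE nz] by blast
  define P where "P = F * E"
  have P: "P \<in> carrier_mat 1 n" unfolding P_def using F E by simp
  have PW: "P * W = 1\<^sub>m 1" unfolding P_def using F E W by (simp add: mult_mat_assoc EW FW)
  have PE: "P * E = P" unfolding P_def using F E by (simp add: mult_mat_assoc EE)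
  have "mvn_equiv (W * P) (1\<^sub>m 1)"
  proof (rule mvn_equivI[OF W P refl PW])
    show "W * P * W = W" using W P by (simp add: mult_mat_assoc PW)
    show "P * W * P = P" using P by (simp add: PW)
  qed
  moreover have "E * (W * P) = (E * W) * P" using E W P by (simp add: mult_mat_assoc)
  then have "E * (W * P) = W * P" by (simp only: EW)
  moreover have "W * P * E = W * P" using E W P by (simp add: mult_mat_assoc PE)
  moreover have "W * P \<in> carrier_mat n n" using W P by simp
  ultimately show ?thesis by blast
qed

lemma bezout_subidempotent_extend:
  fixes E p :: "'a::idom mat"
  assumes bz: "bezout_domain TYPE('a)" and E: "E \<in> carrier_mat n n" and EE: "E * E = E"
    and pj: "mvn_equiv p (1\<^sub>m j)" and p: "p \<in> carrier_mat n n" and Ep: "E * p = p" and pE: "p * E = p"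
    and ne: "p \<noteq> E"
  shows "\<exists>p'. p' \<in> carrier_mat n n \<and> mvn_equiv p' (1\<^sub>m (j + 1)) \<and> E * p' = p' \<and> p' * E = p'"
proof -
  have pp: "p * p = p" by (rule mvn_equiv_idem[OF pj p])
  note diff = idempotent_diff[OF E p EE pp Ep pE]
  have Ep_carrier: "E - p \<in> carrier_mat n n" using p by (rule minus_carrier_mat)
  have "E - p \<noteq> 0\<^sub>m n n" using ne mat_diff_eq_zero_imp_eq[OF E p] by blast
  then obtain q where q: "q \<in> carrier_mat n n" and q1: "mvn_equiv q (1\<^sub>m 1)"
    and Epq: "(E - p) * q = q" and qEp: "q * (E - p) = q"
    using bezout_rank_one_subidempotent[OF bz Ep_carrier diff(5)] by blast
  have pq: "p * q = 0\<^sub>m n n" by (rule mult_zero_mat_by_orthogonal[OF p q p Ep_carrier pp Epq diff(3)])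
  have qp: "q * p = 0\<^sub>m n n" by (rule mult_zero_mat_by_orthogonal[OF q p Ep_carrier p qEp pp diff(4)])
  have "E * q = (E * (E - p)) * q" using E p q by (simp add: mult_mat_assoc Epq)
  then have Eq: "E * q = q" by (simp only: diff(1) Epq)
  have "q * E = (q * (E - p)) * E" by (simp only: qEp)
  also have "\<dots> = q * ((E - p) * E)" using E q Ep_carrier by (simp add: mult_mat_assoc)
  finally have qE: "q * E = q" by (simp only: diff(2) qEp)
  have "E * (p + q) = p + q" using E p q by (simp add: mult_add_distrib_mat Ep Eq)
  moreover have "(p + q) * E = p + q" using E p q by (simp add: add_mult_distrib_mat pE qE)
  moreover have "mvn_equiv (p + q) (1\<^sub>m (j + 1))" by (rule mvn_equiv_one_mat_add[OF pj q1 p q pq qp])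
  moreover have "p + q \<in> carrier_mat n n" using p q by simp
  ultimately show ?thesis by blast
qed

lemma bezout_idempotent_split:
  fixes E :: "'a::idom mat"
  assumes bz: "bezout_domain TYPE('a)" and E: "E \<in> carrier_mat n n" and EE: "E * E = E"
  shows "\<exists>k. mvn_equiv E (1\<^sub>m k)"
proof -
  have "\<exists>k. mvn_equiv E (1\<^sub>m k)"
    if "mvn_equiv p (1\<^sub>m j)" and "p \<in> carrier_mat n n" and "E * p = p" and "p * E = p" for p j
    using that
  proof (induction "n - j" arbitrary: p j rule: less_induct)
    case less
    show ?case
    proof (cases "p = E")
      case True
      with less.prems(1) show ?thesis by blast
    next
      case False
      then obtain p' where p': "p' \<in> carrier_mat n n" "mvn_equiv p' (1\<^sub>m (j + 1))"
        "E * p' = p'" "p' * E = p'" using bezout_subidempotent_extend[OF bz E EE less.prems] by blast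
      have "j + 1 \<le> n" by (rule mvn_equiv_one_mat_le[OF p'(2,1)])
      then show ?thesis using less.hyps[of "j + 1" p'] p' by simp
    qed
  qed
  moreover have "mvn_equiv (0\<^sub>m n n) (1\<^sub>m 0 :: 'a mat)"
    by (rule mvn_equivI[of "0\<^sub>m n 0" n 0 "0\<^sub>m 0 n"]) auto
  ultimately show ?thesis using E by simp
qed

lemma bezout_mvn_equiv_compl:
  fixes e f :: "'a::idom mat"
  assumes bz: "bezout_domain TYPE('a)" and e: "e \<in> carrier_mat n n" and f: "f \<in> carrier_mat n n"
    and ef: "mvn_equiv e f"
  shows "mvn_equiv (1\<^sub>m n - e) (1\<^sub>m n - f)"
proof -
  have ee: "e * e = e" by (rule mvn_equiv_idem[OF ef e])
  have ff: "f * f = f" by (rule mvn_equiv_idem[OF mvn_equiv_sym[OF ef] f])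
  have e': "1\<^sub>m n - e \<in> carrier_mat n n" and f': "1\<^sub>m n - f \<in> carrier_mat n n"
    using e f by (simp_all add: minus_carrier_mat)
  note split = bezout_idempotent_split[OF bz]
  obtain a b c d where a: "mvn_equiv e (1\<^sub>m a)" and b: "mvn_equiv (1\<^sub>m n - e) (1\<^sub>m b)"
    and c: "mvn_equiv f (1\<^sub>m c)" and d: "mvn_equiv (1\<^sub>m n - f) (1\<^sub>m d)"
    using split[OF e ee] split[OF e' idempotent_compl(1)[OF e ee]]
      split[OF f ff] split[OF f' idempotent_compl(1)[OF f ff]] by blast
  have "mvn_equiv (1\<^sub>m a) (1\<^sub>m c :: 'a mat)"
    by (rule mvn_equiv_trans[OF mvn_equiv_sym[OF a] mvn_equiv_trans[OF ef c e f one_carrier_mat]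
          one_carrier_mat e one_carrier_mat])
  then have "a = c" by (rule mvn_equiv_one_mat_eq)
  moreover have "a + b = n" and "c + d = n"
    using mvn_equiv_one_mat_compl[OF a b e] mvn_equiv_one_mat_compl[OF c d f] by simp_all
  ultimately have "b = d" by simp
  with d have "mvn_equiv (1\<^sub>m n - f) (1\<^sub>m b)" by simp
  then show ?thesis by (rule mvn_equiv_trans[OF b mvn_equiv_sym e' one_carrier_mat f'])
qed

theorem theorem3p1:
  fixes A B C :: "'a::idom mat" and n :: nat
  assumes "bezout_domain TYPE('a)"
    and "A \<in> carrier_mat n n" and "B \<in> carrier_mat n n" and "C \<in> carrier_mat n n"
    and "A * B * A = A * C * A"
    and "group_invertible (A * B)" and "group_invertible (C * A)"
  shows "similar_mat (group_inv (A * B)) (group_inv (C * A))"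
proof -
  note bz = assms(1) and c = assms(2-4) and ABA = assms(5)
  have AB: "A * B \<in> carrier_mat n n" and CA: "C * A \<in> carrier_mat n n" using c by auto
  define H where "H = group_inv (C * A)"
  have H: "is_group_inverse (C * A) H" unfolding H_def by (rule is_group_inverse_group_inv[OF CA assms(7)])
  have G: "group_inv (A * B) = A * H * H * B"
    by (rule group_inv_eqI[OF AB is_group_inverse_cline[OF c ABA H assms(6)]])
  define U where "U = A * (C * A) * H"
  define V where "V = H * B"
  note sandwich = group_inverse_sandwich[OF c ABA H, folded U_def V_def]
  have cH: "H \<in> carrier_mat n n" by (rule is_group_inverseD(1)[OF CA H])
  have cU: "U \<in> carrier_mat n n" and cV: "V \<in> carrier_mat n n" unfolding U_def V_def using c cH by auto
  have "mvn_equiv (U * V) (V * U)" by (rule mvn_equivI[OF cU cV refl refl sandwich(2,3)])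
  then have compl: "mvn_equiv (1\<^sub>m n - U * V) (1\<^sub>m n - V * U)"
    using cU cV by (intro bezout_mvn_equiv_compl[OF bz]) auto
  have "V * U * H = H" using is_group_inverse_absorb(2)[OF CA H] by (simp only: sandwich(1))
  moreover have "H * (V * U) = H"
    using is_group_inverseD(3)[OF CA H] CA cH by (simp add: sandwich(1) mult_mat_assoc)
  ultimately have "similar_mat (U * H * V) H"
    by (rule similar_mat_sandwich[OF cU cV cH sandwich(2,3) compl])
  then show ?thesis unfolding G H_def[symmetric] sandwich(4) .
qed

end
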